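(* Let $G$ be a connected plane graph with no cycles of length $4$, $7$ or $9$, and let $C$ be a bad cycle of $G$. Then $|C|\in\{12,13\}$. Moreover, if $|C|=12$, then $C$ has a claw whose cells have lengths $\{3,5,10\}$, $\{5,5,8\}$ or $\{6,6,6\}$ (a $(3,5,10)$-claw, $(5,5,8)$-claw or $(6,6,6)$-claw); and if $|C|=13$, then $C$ has a claw whose cells have lengths $\{3,5,11\}$ (a $(3,5,11)$-claw) or a biclaw whose cells have lengths $\{5,5,5,8\}$ (a $(5,5,5,8)$-biclaw).
   Context: All graphs are finite and simple; a $k$-cycle is a cycle of length $k$ and a $13^-$-cycle is a cycle of length at most $13$. Let $C$ be a cycle in a plane graph $G$. If a vertex $v\notin V(C)$ has three neighbors $v_1,v_2,v_3$ on $C$, the subgraph formed by the edges $vv_1,vv_2,vv_3$ is called a claw of $C$. If $u_1,u_2\notin V(C)$ are adjacent and each $u_i$ has two neighbors $u_i',u_i''$ on $C$ (it is allowed that $\{u_1',u_1''\}\cap\{u_2',u_2''\}\neq\emptyset$), the subgraph formed by the edges $u_1u_2,u_1u_1',u_1u_1'',u_2u_2',u_2u_2''$ is called a biclaw of $C$. A claw or biclaw $H$ of $C$ divides the (open) disc bounded by $C$ on the side containing $H$ into regions; the boundary cycles of these regions (each consisting of a segment of $C$ and a path of $H$) are called the cells of the claw/biclaw. A $(c_1,c_2,c_3)$-claw (resp. $(c_1,c_2,c_3,c_4)$-biclaw) is a claw (resp. biclaw) whose cells have lengths $c_1,c_2,c_3$ (resp. $c_1,\dots,c_4$). A good cycle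 is a $13^-$-cycle that has neither claws nor biclaws; a bad cycle is a $13^-$-cycle that is not good. *)

theory Defs
  imports "HOL-Analysis.Analysis" "HOL-Library.Multiset"
begin

definition simple_graph :: "'a set \<Rightarrow> ('a \<Rightarrow> 'a \<Rightarrow> bool) \<Rightarrow> bool" where
  "simple_graph V E \<longleftrightarrow> finite V \<and> (\<forall>u v. E u v \<longrightarrow> u \<in> V \<and> v \<in> V \<and> u \<noteq> v \<and> E v u)"

definition connected_graph :: "'a set \<Rightarrow> ('a \<Rightarrow> 'a \<Rightarrow> bool) \<Rightarrow> bool" where
  "connected_graph V E \<longleftrightarrow> (\<forall>u\<in>V. \<forall>v\<in>V. E\<^sup>*\<^sup>* u v)"

definition plane_embedding ::
  "'a set \<Rightarrow> ('a \<Rightarrow> 'a \<Rightarrow> bool) \<Rightarrow> ('a \<Rightarrow> complex) \<Rightarrow> ('a \<Rightarrow> 'a \<Rightarrow> real \<Rightarrow> complex) \<Rightarrow> bool" where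
  "plane_embedding V E pos \<gamma> \<longleftrightarrow>
     inj_on pos V \<and>
     (\<forall>u v. E u v \<longrightarrow> arc (\<gamma> u v) \<and> pathstart (\<gamma> u v) = pos u \<and> pathfinish (\<gamma> u v) = pos v
                      \<and> path_image (\<gamma> v u) = path_image (\<gamma> u v)) \<and>
     (\<forall>u v w. E u v \<and> w \<in> V \<and> w \<noteq> u \<and> w \<noteq> v \<longrightarrow> pos w \<notin> path_image (\<gamma> u v)) \<and>
     (\<forall>u v x y. E u v \<and> E x y \<and> {u, v} \<noteq> {x, y} \<longrightarrow>
          path_image (\<gamma> u v) \<inter> path_image (\<gamma> x y) \<subseteq> pos ` ({u, v} \<inter> {x, y}))"

definition planar :: "'a set \<Rightarrow> ('a \<Rightarrow> 'a \<Rightarrow> bool) \<Rightarrow> bool" where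
  "planar V E \<longleftrightarrow> (\<exists>pos \<gamma>. plane_embedding V E pos \<gamma>)"

definition is_cycle :: "'a set \<Rightarrow> ('a \<Rightarrow> 'a \<Rightarrow> bool) \<Rightarrow> 'a list \<Rightarrow> bool" where
  "is_cycle V E C \<longleftrightarrow> length C \<ge> 3 \<and> distinct C \<and> set C \<subseteq> V \<and>
     (\<forall>i < length C. E (C ! i) (C ! ((i + 1) mod length C)))"

definition has_claw :: "'a set \<Rightarrow> ('a \<Rightarrow> 'a \<Rightarrow> bool) \<Rightarrow> 'a list \<Rightarrow> bool" where
  "has_claw V E C \<longleftrightarrow> (\<exists>v v1 v2 v3. v \<in> V \<and> v \<notin> set C \<and>
      v1 \<in> set C \<and> v2 \<in> set C \<and> v3 \<in> set C \<and> v1 \<noteq> v2 \<and> v1 \<noteq> v3 \<and> v2 \<noteq> v3 \<and>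
      E v v1 \<and> E v v2 \<and> E v v3)"

definition has_biclaw :: "'a set \<Rightarrow> ('a \<Rightarrow> 'a \<Rightarrow> bool) \<Rightarrow> 'a list \<Rightarrow> bool" where
  "has_biclaw V E C \<longleftrightarrow> (\<exists>u1 u2 a b c d. u1 \<in> V \<and> u2 \<in> V \<and> u1 \<notin> set C \<and> u2 \<notin> set C \<and>
      E u1 u2 \<and> a \<in> set C \<and> b \<in> set C \<and> c \<in> set C \<and> d \<in> set C \<and> a \<noteq> b \<and> c \<noteq> d \<and>
      E u1 a \<and> E u1 b \<and> E u2 c \<and> E u2 d)"

definition good_cycle :: "'a set \<Rightarrow> ('a \<Rightarrow> 'a \<Rightarrow> bool) \<Rightarrow> 'a list \<Rightarrow> bool" where
  "good_cycle V E C \<longleftrightarrow> is_cycle V E C \<and> length C \<le> 13 \<and> \<not> has_claw V E C \<and> \<not> has_biclaw V E C"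

definition bad_cycle :: "'a set \<Rightarrow> ('a \<Rightarrow> 'a \<Rightarrow> bool) \<Rightarrow> 'a list \<Rightarrow> bool" where
  "bad_cycle V E C \<longleftrightarrow> is_cycle V E C \<and> length C \<le> 13 \<and> \<not> good_cycle V E C"

text \<open>A claw with feet at positions i1 < i2 < i3 of C: its cells consist of the
  segment of C between consecutive feet plus the two claw edges.  M is the
  multiset of cell lengths.\<close>
definition has_typed_claw :: "'a set \<Rightarrow> ('a \<Rightarrow> 'a \<Rightarrow> bool) \<Rightarrow> 'a list \<Rightarrow> nat multiset \<Rightarrow> bool" where
  "has_typed_claw V E C M \<longleftrightarrow> (\<exists>v i1 i2 i3. v \<in> V \<and> v \<notin> set C \<and>
      i1 < i2 \<and> i2 < i3 \<and> i3 < length C \<and>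
      E v (C ! i1) \<and> E v (C ! i2) \<and> E v (C ! i3) \<and>
      M = {# i2 - i1 + 2, i3 - i2 + 2, length C + i1 - i3 + 2 #})"

text \<open>A biclaw u1u2 whose feet appear around C (in a plane graph necessarily
  non-interleaved) in the cyclic order u1', u1'', u2', u2'' at positions
  i1 < i2 \<le> i3 < i4 \<le> i1 + |C| (taken mod |C|; coincidences allowed).  The four
  cells are: segment u1'..u1'' + 2 edges, segment u1''..u2' + 3 edges
  (u1''u1, u1u2, u2u2'), segment u2'..u2'' + 2 edges, segment u2''..u1' + 3 edges.\<close>
definition has_typed_biclaw :: "'a set \<Rightarrow> ('a \<Rightarrow> 'a \<Rightarrow> bool) \<Rightarrow> 'a list \<Rightarrow> nat multiset \<Rightarrow> bool" where
  "has_typed_biclaw V E C M \<longleftrightarrow> (\<exists>u1 u2 i1 i2 i3 i4. u1 \<in> V \<and> u2 \<in> V \<and>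
      u1 \<notin> set C \<and> u2 \<notin> set C \<and> E u1 u2 \<and>
      i1 < length C \<and> i1 < i2 \<and> i2 \<le> i3 \<and> i3 < i4 \<and> i4 \<le> i1 + length C \<and>
      E u1 (C ! i1) \<and> E u1 (C ! (i2 mod length C)) \<and>
      E u2 (C ! (i3 mod length C)) \<and> E u2 (C ! (i4 mod length C)) \<and>
      M = {# i2 - i1 + 2, i3 - i2 + 3, i4 - i3 + 2, i1 + length C - i4 + 3 #})"

end

(*
  A claw or biclaw of C, together with arcs of C, spans cycles whose lengths are determined by
  the positions of its feet on C.  Since G has no 4-, 7- or 9-cycles and |C| <= 13, an exhaustive
  check over these finitely many positions leaves only the listed cell types, except that the
  count alone also admits biclaws u1u2 whose two pairs of feet interleave on C.  Planarity rules
  these out: the two arcs of C between the feet of u1 and the path through u1 form a theta graph,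
  and u2 would be adjacent to inner vertices of all three of its paths, which the Jordan curve
  theorem forbids.
*)
theory Submission
  imports Defs
begin

section \<open>Theta graphs in the plane\<close>

lemma connected_inside_or_outside:
  fixes J K :: "complex set"
  assumes "closed J" "connected K" "K \<inter> J = {}"
  shows "K \<subseteq> inside J \<or> K \<subseteq> outside J"
proof -
  have "K \<subseteq> inside J \<union> outside J" using assms(3) by auto
  moreover have "inside J \<inter> outside J \<inter> K = {}" by auto
  ultimately show ?thesis
    using connectedD[OF assms(2) open_inside[OF assms(1)] open_outside[OF assms(1)]] by blast
qed

lemma connected_subset_inside:
  fixes J K :: "complex set"
  assumes "closed J" "connected K" "K \<inter> J = {}" "w \<in> closure K" "w \<in> inside J"
  shows "K \<subseteq> inside J"
proof -
  have "inside J \<inter> closure (outside J) = {}"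
    by (simp add: open_Int_closure_eq_empty[OF open_inside[OF assms(1)]] inside_Int_outside)
  then have "\<not> K \<subseteq> outside J" using assms(4,5) closure_mono by blast
  then show ?thesis using connected_inside_or_outside[OF assms(1-3)] by blast
qed

lemma connected_subset_outside:
  fixes J K :: "complex set"
  assumes "closed J" "connected K" "K \<inter> J = {}" "w \<in> closure K" "w \<in> outside J"
  shows "K \<subseteq> outside J"
proof -
  have "outside J \<inter> closure (inside J) = {}"
    by (simp add: open_Int_closure_eq_empty[OF open_outside[OF assms(1)]] inside_Int_outside Int_commute)
  then have "\<not> K \<subseteq> inside J" using assms(4,5) closure_mono by blast
  then show ?thesis using connected_inside_or_outside[OF assms(1-3)] by blast
qed

lemma outside_Int3_nonempty:
  fixes A B C :: "complex set"
  assumes "bounded A" "bounded B" "bounded C"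
  obtains f where "f \<in> outside A" "f \<in> outside B" "f \<in> outside C"
proof -
  have "bounded (- outside A \<union> - outside B \<union> - outside C)"
    using assms cobounded_outside bounded_Un by metis
  then have "- outside A \<union> - outside B \<union> - outside C \<noteq> UNIV"
    using not_bounded_UNIV by metis
  then show ?thesis using that by blast
qed

lemma arc_inner_point:
  assumes "arc g"
  obtains x where "x \<in> path_image g" "x \<noteq> pathstart g" "x \<noteq> pathfinish g"
proof
  have inj: "inj_on g {0..1}" using assms arc_imp_inj_on by blast
  show "g (1/2) \<in> path_image g" by (simp add: path_image_def)
  show "g (1/2) \<noteq> pathstart g" using inj_onD[OF inj, of "1/2" 0] by (auto simp: pathstart_def)
  show "g (1/2) \<noteq> pathfinish g" using inj_onD[OF inj, of "1/2" 1] by (auto simp: pathfinish_def)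
qed

lemma Jordan_inside_outside_two_arcs:
  fixes X Y :: "real \<Rightarrow> complex"
  assumes "arc X" "arc Y" "pathstart X = p" "pathfinish X = q" "pathstart Y = p" "pathfinish Y = q"
    "path_image X \<inter> path_image Y = {p, q}"
  shows "inside (path_image X \<union> path_image Y) \<noteq> {} \<and>
         connected (inside (path_image X \<union> path_image Y)) \<and>
         connected (outside (path_image X \<union> path_image Y)) \<and>
         frontier (inside (path_image X \<union> path_image Y)) = path_image X \<union> path_image Y"
proof -
  have "simple_path (X +++ reversepath Y)"
    using assms by (auto simp: simple_path_join_loop_eq arc_simple_path simple_path_reversepath)
  moreover have "pathfinish (X +++ reversepath Y) = pathstart (X +++ reversepath Y)"
    using assms by simp
  moreover have "path_image (X +++ reversepath Y) = path_image X \<union> path_image Y"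
    using assms by (simp add: path_image_join)
  ultimately show ?thesis using Jordan_inside_outside by metis
qed

definition theta_arcs ::
  "complex \<Rightarrow> complex \<Rightarrow> (real \<Rightarrow> complex) \<Rightarrow> (real \<Rightarrow> complex) \<Rightarrow> (real \<Rightarrow> complex) \<Rightarrow> bool" where
  "theta_arcs p q X Y Z \<longleftrightarrow>
     (\<forall>A \<in> {X, Y, Z}. arc A \<and> pathstart A = p \<and> pathfinish A = q) \<and>
     path_image X \<inter> path_image Y = {p, q} \<and> path_image X \<inter> path_image Z = {p, q} \<and>
     path_image Y \<inter> path_image Z = {p, q}"

lemma theta_arcs_rotate: "theta_arcs p q X Y Z \<Longrightarrow> theta_arcs p q Y Z X"
  and theta_arcs_swap: "theta_arcs p q X Y Z \<Longrightarrow> theta_arcs p q X Z Y"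
  by (auto simp: theta_arcs_def)

lemma theta_outside_third:
  assumes theta: "theta_arcs p q X Y Z"
    and w: "w \<in> outside (path_image Y \<union> path_image Z)" "w \<in> outside (path_image X \<union> path_image Z)"
  shows "w \<in> outside (path_image X \<union> path_image Y)"
proof -
  let ?X = "path_image X" and ?Y = "path_image Y" and ?Z = "path_image Z"
  have arcs: "arc X" "arc Y" "arc Z"
    and ends: "pathstart X = p" "pathfinish X = q" "pathstart Y = p" "pathfinish Y = q"
      "pathstart Z = p" "pathfinish Z = q"
    and XY: "?X \<inter> ?Y = {p, q}" and XZ: "?X \<inter> ?Z = {p, q}" and YZ: "?Y \<inter> ?Z = {p, q}"
    using theta by (auto simp: theta_arcs_def)
  have cl: "closed (path_image A \<union> path_image B)" if "arc A" "arc B" for A B :: "real \<Rightarrow> complex"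
    using that by (simp add: arc_imp_path closed_Un closed_path_image)
  have bd: "bounded (?X \<union> ?Y)" "bounded (?X \<union> ?Z)" "bounded (?Y \<union> ?Z)"
    using arcs by (simp_all add: arc_imp_path bounded_path_image bounded_Un)
  obtain f where f: "f \<in> outside (?X \<union> ?Y)" "f \<in> outside (?X \<union> ?Z)" "f \<in> outside (?Y \<union> ?Z)"
    using outside_Int3_nonempty[OF bd] .
  have "connected (outside (?Y \<union> ?Z))" "connected (outside (?X \<union> ?Z))"
    using Jordan_inside_outside_two_arcs[OF arcs(2,3) ends(3-6) YZ]
      Jordan_inside_outside_two_arcs[OF arcs(1,3) ends(1,2,5,6) XZ] by blast+
  then have ccS: "connected_component (- (?Y \<union> ?Z)) w f"
    and ccT: "connected_component (- (?X \<union> ?Z)) w f"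
    unfolding connected_component_def using w f outside_no_overlap[of "?Y \<union> ?Z"]
      outside_no_overlap[of "?X \<union> ?Z"] by blast+
  have "p \<in> ?Z" "q \<in> ?Z" using ends(5,6) pathstart_in_path_image pathfinish_in_path_image by metis+
  then have "(?Y \<union> ?Z) \<inter> (?X \<union> ?Z) = ?Z" using XY by auto
  then have con: "connected ((?Y \<union> ?Z) \<inter> (?X \<union> ?Z))"
    using arcs(3) by (simp add: arc_imp_path connected_path_image)
  \<comment> \<open>Neither cycle separates \<open>w\<close> from the far point \<open>f\<close> and the two cycles meet in the
    connected arc \<open>Z\<close>, so by Janiszewski's theorem their union does not separate them either.\<close>
  have "connected_component (- ((?Y \<union> ?Z) \<union> (?X \<union> ?Z))) w f"
    by (rule Janiszewski[OF _ _ con ccS ccT])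
      (use arcs in \<open>auto simp: arc_imp_path compact_path_image compact_Un closed_Un closed_path_image\<close>)
  then have "connected_component (- (?X \<union> ?Y)) w f"
    by (rule connected_component_of_subset) auto
  then obtain T where T: "connected T" "T \<subseteq> - (?X \<union> ?Y)" "w \<in> T" "f \<in> T"
    unfolding connected_component_def by blast
  have "T \<subseteq> outside (?X \<union> ?Y)"
    by (rule connected_subset_outside[OF cl[OF arcs(1,2)] T(1) _ _ f(1)]) (use T closure_subset in auto)
  then show ?thesis using T(3) by blast
qed

lemma theta_arc_meets_inside:
  assumes theta: "theta_arcs p q X Y Z"
  shows "path_image Z \<inter> inside (path_image X \<union> path_image Y) \<noteq> {} \<or>
         path_image X \<inter> inside (path_image Y \<union> path_image Z) \<noteq> {} \<or>
         path_image Y \<inter> inside (path_image X \<union> path_image Z) \<noteq> {}"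
proof (rule ccontr)
  let ?X = "path_image X" and ?Y = "path_image Y" and ?Z = "path_image Z"
  assume "\<not> ?thesis"
  then have n1: "?Z \<inter> inside (?X \<union> ?Y) = {}" and n2: "?X \<inter> inside (?Y \<union> ?Z) = {}"
    and n3: "?Y \<inter> inside (?X \<union> ?Z) = {}" by auto
  have arcs: "arc X" "arc Y" "arc Z"
    and ends: "pathstart X = p" "pathfinish X = q" "pathstart Y = p" "pathfinish Y = q"
    and XY: "?X \<inter> ?Y = {p, q}" and XZ: "?X \<inter> ?Z = {p, q}" and YZ: "?Y \<inter> ?Z = {p, q}"
    using theta by (auto simp: theta_arcs_def)
  have cl: "closed (path_image A \<union> path_image B)" if "arc A" "arc B" for A B :: "real \<Rightarrow> complex"
    using that by (simp add: arc_imp_path closed_Un closed_path_image)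
  let ?W = "inside (?X \<union> ?Y)"
  have W: "connected ?W" "?W \<noteq> {}" "frontier ?W = ?X \<union> ?Y"
    using Jordan_inside_outside_two_arcs[OF arcs(1,2) ends XY] by auto
  have WT: "?W \<inter> (?Y \<union> ?Z) = {}" "?W \<inter> (?X \<union> ?Z) = {}"
    using n1 inside_no_overlap[of "?X \<union> ?Y"] by blast+
  obtain x where x: "x \<in> ?X" "x \<noteq> p" "x \<noteq> q" using arc_inner_point[OF arcs(1)] ends by metis
  obtain y where y: "y \<in> ?Y" "y \<noteq> p" "y \<noteq> q" using arc_inner_point[OF arcs(2)] ends by metis
  have "x \<in> closure ?W" using W(3) x(1) frontier_def by (metis Diff_iff UnI1)
  moreover have "x \<in> outside (?Y \<union> ?Z)" using x XY XZ n2 inside_Un_outside by blast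
  ultimately have W1: "?W \<subseteq> outside (?Y \<union> ?Z)"
    using connected_subset_outside[OF cl[OF arcs(2,3)] W(1) WT(1)] by blast
  have "y \<in> closure ?W" using W(3) y(1) frontier_def by (metis Diff_iff UnI2)
  moreover have "y \<in> outside (?X \<union> ?Z)" using y XY YZ n3 inside_Un_outside by blast
  ultimately have W2: "?W \<subseteq> outside (?X \<union> ?Z)"
    using connected_subset_outside[OF cl[OF arcs(1,3)] W(1) WT(2)] by blast
  obtain w where "w \<in> ?W" using W(2) by blast
  then show False
    using W1 W2 theta_outside_third[OF theta] inside_Int_outside[of "?X \<union> ?Y"] by blast
qed

lemma theta_face_touches_two_arcs:
  assumes theta: "theta_arcs p q X Y Z"
    and Z_in: "path_image Z \<inter> inside (path_image X \<union> path_image Y) \<noteq> {}"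
    and K: "connected K" "K \<inter> (path_image X \<union> path_image Y \<union> path_image Z) = {}"
    and touch: "\<forall>A \<in> {X, Y, Z}. \<exists>x \<in> path_image A - {p, q}. x \<in> closure K"
  shows False
proof -
  let ?X = "path_image X" and ?Y = "path_image Y" and ?Z = "path_image Z"
  have arcs: "arc X" "arc Y" "arc Z"
    and ends: "pathstart X = p" "pathfinish X = q" "pathstart Y = p" "pathfinish Y = q"
      "pathstart Z = p" "pathfinish Z = q"
    and XY: "?X \<inter> ?Y = {p, q}" and XZ: "?X \<inter> ?Z = {p, q}" and YZ: "?Y \<inter> ?Z = {p, q}"
    using theta by (auto simp: theta_arcs_def)
  obtain x y z where x: "x \<in> ?X - {p, q}" "x \<in> closure K" and y: "y \<in> ?Y - {p, q}" "y \<in> closure K"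
    and z: "z \<in> ?Z - {p, q}" "z \<in> closure K"
    using touch by auto
  have pq: "p \<noteq> q" using arcs(1) ends(1,2) arc_distinct_ends by metis
  obtain "inside (?X \<union> ?Z) \<inter> inside (?Y \<union> ?Z) = {}"
    and split: "inside (?X \<union> ?Z) \<union> inside (?Y \<union> ?Z) \<union> (?Z - {p, q}) = inside (?X \<union> ?Y)"
    using split_inside_simple_closed_curve[of X p q Y Z] arcs ends pq XY XZ YZ Z_in
    by (auto simp: arc_imp_simple_path)
  have cl: "closed (path_image A \<union> path_image B)" if "arc A" "arc B" for A B :: "real \<Rightarrow> complex"
    using that by (simp add: arc_imp_path closed_Un closed_path_image)
  have "K \<subseteq> inside (?X \<union> ?Y)"
    by (rule connected_subset_inside[OF cl[OF arcs(1,2)] K(1) _ z(2)]) (use K(2) z(1) split in auto)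
  then have K_in: "K \<subseteq> inside (?X \<union> ?Z) \<union> inside (?Y \<union> ?Z)"
    using K(2) split by auto
  have "y \<notin> inside (?X \<union> ?Z)" using y(1) split inside_no_overlap by blast
  then have y_out: "y \<in> outside (?X \<union> ?Z)" using y(1) XY YZ inside_Un_outside by blast
  have K_out1: "K \<subseteq> outside (?X \<union> ?Z)"
    by (rule connected_subset_outside[OF cl[OF arcs(1,3)] K(1) _ y(2) y_out]) (use K(2) in auto)
  have "x \<notin> inside (?Y \<union> ?Z)" using x(1) split inside_no_overlap by blast
  then have x_out: "x \<in> outside (?Y \<union> ?Z)" using x(1) XY XZ inside_Un_outside by blast
  have K_out2: "K \<subseteq> outside (?Y \<union> ?Z)"
    by (rule connected_subset_outside[OF cl[OF arcs(2,3)] K(1) _ x(2) x_out]) (use K(2) in auto)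
  have "K \<noteq> {}" using x(2) by auto
  then show False using K_in K_out1 K_out2 inside_Int_outside by blast
qed

lemma theta_no_face_touching_all_arcs:
  assumes theta: "theta_arcs p q X Y Z"
    and K: "connected K" "K \<inter> (path_image X \<union> path_image Y \<union> path_image Z) = {}"
    and touch: "\<forall>A \<in> {X, Y, Z}. \<exists>x \<in> path_image A - {p, q}. x \<in> closure K"
  shows False
  using theta_arc_meets_inside[OF theta]
proof (elim disjE)
  assume "path_image Z \<inter> inside (path_image X \<union> path_image Y) \<noteq> {}"
  then show False using theta_face_touches_two_arcs[OF theta _ K touch] by blast
next
  assume "path_image X \<inter> inside (path_image Y \<union> path_image Z) \<noteq> {}"
  moreover have "K \<inter> (path_image Y \<union> path_image Z \<union> path_image X) = {}" using K(2) by auto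
  moreover have "\<forall>A \<in> {Y, Z, X}. \<exists>x \<in> path_image A - {p, q}. x \<in> closure K"
    using touch by (simp add: insert_commute)
  ultimately show False using theta_face_touches_two_arcs[OF theta_arcs_rotate[OF theta] _ K(1)] by blast
next
  assume "path_image Y \<inter> inside (path_image X \<union> path_image Z) \<noteq> {}"
  moreover have "K \<inter> (path_image X \<union> path_image Z \<union> path_image Y) = {}" using K(2) by auto
  moreover have "\<forall>A \<in> {X, Z, Y}. \<exists>x \<in> path_image A - {p, q}. x \<in> closure K"
    using touch by (simp add: insert_commute)
  ultimately show False using theta_face_touches_two_arcs[OF theta_arcs_swap[OF theta] _ K(1)] by blast
qed

section \<open>Curves traced by walks in a plane graph\<close>

lemma plane_embedding_edge:
  assumes "plane_embedding V E pos \<gamma>" "E u v"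
  shows "arc (\<gamma> u v)" "pathstart (\<gamma> u v) = pos u" "pathfinish (\<gamma> u v) = pos v"
  using assms unfolding plane_embedding_def by blast+

lemma plane_embedding_edges_Int:
  assumes "plane_embedding V E pos \<gamma>" "E u v" "E s t" "{u, v} \<noteq> {s, t}"
  shows "path_image (\<gamma> u v) \<inter> path_image (\<gamma> s t) \<subseteq> pos ` ({u, v} \<inter> {s, t})"
  using assms unfolding plane_embedding_def by blast

definition walk_edges :: "'a list \<Rightarrow> ('a \<times> 'a) set" where
  "walk_edges P = set (zip P (tl P))"

lemma walk_edges_Cons_Cons [simp]: "walk_edges (x # y # P) = insert (x, y) (walk_edges (y # P))"
  by (simp add: walk_edges_def)

lemma walk_edges_singleton [simp]: "walk_edges [x] = {}"
  by (simp add: walk_edges_def)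

lemma walk_edges_iff: "(u, v) \<in> walk_edges P \<longleftrightarrow> (\<exists>i. Suc i < length P \<and> u = P ! i \<and> v = P ! Suc i)"
proof
  assume "(u, v) \<in> walk_edges P"
  then obtain i where "i < length (tl P)" "u = P ! i" "v = tl P ! i"
    by (auto simp: walk_edges_def in_set_zip)
  then show "\<exists>i. Suc i < length P \<and> u = P ! i \<and> v = P ! Suc i"
    by (intro exI[of _ i]) (auto simp: nth_tl)
next
  assume "\<exists>i. Suc i < length P \<and> u = P ! i \<and> v = P ! Suc i"
  then obtain i where "Suc i < length P" "u = P ! i" "v = P ! Suc i" by blast
  then show "(u, v) \<in> walk_edges P"
    unfolding walk_edges_def in_set_zip by (intro exI[of _ i]) (auto simp: nth_tl)
qed

lemma walk_edges_subset: "(u, v) \<in> walk_edges P \<Longrightarrow> u \<in> set P \<and> v \<in> set P"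
  by (auto simp: walk_edges_iff)

lemma walk_edges_adj: "successively E P \<Longrightarrow> (u, v) \<in> walk_edges P \<Longrightarrow> E u v"
  by (auto simp: walk_edges_iff successively_conv_nth)

lemma walk_vertex_on_edge:
  assumes "2 \<le> length P" "x \<in> set P"
  obtains u v where "(u, v) \<in> walk_edges P" "x = u \<or> x = v"
proof -
  obtain i where i: "i < length P" "x = P ! i" using assms(2) by (auto simp: in_set_conv_nth)
  show thesis
  proof (cases "Suc i < length P")
    case True
    then show thesis using that[of "P ! i" "P ! Suc i"] i by (auto simp: walk_edges_iff)
  next
    case False
    then have "Suc (i - 1) < length P" "Suc (i - 1) = i" using i(1) assms(1) by auto
    then show thesis using that[of "P ! (i - 1)" "P ! i"] i by (metis walk_edges_iff)
  qed
qed

lemma walk_edge_not_ends: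
  assumes "distinct P" "3 \<le> length P" "(u, v) \<in> walk_edges P"
  shows "{u, v} \<noteq> {hd P, last P}"
proof
  assume uv: "{u, v} = {hd P, last P}"
  obtain i where i: "Suc i < length P" "u = P ! i" "v = P ! Suc i"
    using assms(3) unfolding walk_edges_iff by blast
  have lt: "i < length P" "0 < length P" "length P - 1 < length P" using i(1) by auto
  note inj = nth_eq_iff_index_eq[OF assms(1)]
  have "P \<noteq> []" using assms(2) by auto
  then have ends: "hd P = P ! 0" "last P = P ! (length P - 1)" by (simp_all add: hd_conv_nth last_conv_nth)
  from uv have "u = hd P \<and> v = last P \<or> u = last P \<and> v = hd P" by (simp add: doubleton_eq_iff)
  then show False
  proof
    assume "u = hd P \<and> v = last P"
    then have "i = 0" "Suc i = length P - 1"
      using inj[OF lt(1,2)] inj[OF i(1) lt(3)] i(2,3) ends by auto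
    then show False using assms(2) by simp
  next
    assume "u = last P \<and> v = hd P"
    then show False using inj[OF i(1) lt(2)] i(3) ends by auto
  qed
qed

definition graph_path :: "('a \<Rightarrow> 'a \<Rightarrow> bool) \<Rightarrow> 'a \<Rightarrow> 'a \<Rightarrow> 'a list \<Rightarrow> bool" where
  "graph_path E a b P \<longleftrightarrow> P \<noteq> [] \<and> distinct P \<and> successively E P \<and> hd P = a \<and> last P = b"

lemma graph_path_inner_vertex_length:
  assumes "graph_path E a b P" "x \<in> set P" "x \<noteq> a" "x \<noteq> b"
  shows "3 \<le> length P"
  using assms unfolding graph_path_def
  by (cases P rule: remdups_adj.cases) (auto split: if_splits simp: Suc_le_eq)

lemma successively_subset_vertices:
  assumes "simple_graph V E" "successively E P" "2 \<le> length P"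
  shows "set P \<subseteq> V"
proof
  fix x assume "x \<in> set P"
  then obtain u v where "(u, v) \<in> walk_edges P" "x = u \<or> x = v"
    using walk_vertex_on_edge assms(3) by metis
  then show "x \<in> V" using walk_edges_adj[OF assms(2)] assms(1) by (auto simp: simple_graph_def)
qed

fun walk_curve :: "('a \<Rightarrow> 'a \<Rightarrow> real \<Rightarrow> complex) \<Rightarrow> 'a list \<Rightarrow> real \<Rightarrow> complex" where
  "walk_curve \<gamma> (x # y # P) = (if P = [] then \<gamma> x y else \<gamma> x y +++ walk_curve \<gamma> (y # P))"
| "walk_curve \<gamma> _ = (\<lambda>t. 0)"

lemma walk_curve_arc:
  assumes pe: "plane_embedding V E pos \<gamma>"
  shows "distinct P \<Longrightarrow> 2 \<le> length P \<Longrightarrow> successively E P \<Longrightarrow>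
    arc (walk_curve \<gamma> P) \<and> pathstart (walk_curve \<gamma> P) = pos (hd P) \<and>
    pathfinish (walk_curve \<gamma> P) = pos (last P) \<and>
    path_image (walk_curve \<gamma> P) = (\<Union>(u, v)\<in>walk_edges P. path_image (\<gamma> u v))"
proof (induction P rule: induct_list012)
  case (3 x y P)
  have exy: "E x y" using "3.prems"(3) by simp
  note g = plane_embedding_edge[OF pe exy]
  show ?case
  proof (cases "P = []")
    case True
    then show ?thesis using g by simp
  next
    case False
    have IH: "arc (walk_curve \<gamma> (y # P)) \<and> pathstart (walk_curve \<gamma> (y # P)) = pos y \<and>
        pathfinish (walk_curve \<gamma> (y # P)) = pos (last (y # P)) \<and>
        path_image (walk_curve \<gamma> (y # P)) = (\<Union>(u, v)\<in>walk_edges (y # P). path_image (\<gamma> u v))"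
      using "3.IH"(2) "3.prems" False by (cases P) auto
    have x_new: "x \<notin> set (y # P)" using "3.prems"(1) by simp
    have "path_image (\<gamma> x y) \<inter> path_image (walk_curve \<gamma> (y # P)) \<subseteq> {pos y}"
    proof
      fix z assume z: "z \<in> path_image (\<gamma> x y) \<inter> path_image (walk_curve \<gamma> (y # P))"
      then obtain u v where uv: "(u, v) \<in> walk_edges (y # P)" "z \<in> path_image (\<gamma> u v)" using IH by auto
      have "u \<in> set (y # P)" "v \<in> set (y # P)" using walk_edges_subset[OF uv(1)] by auto
      then have "{x, y} \<noteq> {u, v}" using x_new by auto
      moreover have "E u v" using walk_edges_adj[OF _ uv(1), of E] "3.prems"(3) by simp
      ultimately have "z \<in> pos ` ({x, y} \<inter> {u, v})"
        using plane_embedding_edges_Int[OF pe exy] z uv(2) by blast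
      then show "z \<in> {pos y}" using x_new \<open>u \<in> set (y # P)\<close> \<open>v \<in> set (y # P)\<close> by auto
    qed
    then have "arc (\<gamma> x y +++ walk_curve \<gamma> (y # P))"
      using g IH by (intro arc_join) auto
    then show ?thesis using False g IH by (auto simp: path_image_join)
  qed
qed auto

lemma pos_in_walk_curve:
  assumes pe: "plane_embedding V E pos \<gamma>"
    and P: "distinct P" "2 \<le> length P" "successively E P" and x: "x \<in> set P"
  shows "pos x \<in> path_image (walk_curve \<gamma> P)"
proof -
  obtain u v where uv: "(u, v) \<in> walk_edges P" "x = u \<or> x = v"
    using walk_vertex_on_edge[OF P(2) x] by metis
  note g = plane_embedding_edge[OF pe walk_edges_adj[OF P(3) uv(1)]]
  have "pos x \<in> path_image (\<gamma> u v)"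
    using uv(2) pathstart_in_path_image pathfinish_in_path_image g by metis
  then show ?thesis using walk_curve_arc[OF pe P] uv(1) by blast
qed

lemma walk_curves_Int_subset:
  assumes pe: "plane_embedding V E pos \<gamma>"
    and P: "distinct P" "2 \<le> length P" "successively E P"
    and Q: "distinct Q" "2 \<le> length Q" "successively E Q"
    and no_common_edge: "\<forall>(u, v)\<in>walk_edges P. u \<notin> set Q \<or> v \<notin> set Q"
  shows "path_image (walk_curve \<gamma> P) \<inter> path_image (walk_curve \<gamma> Q) \<subseteq> pos ` (set P \<inter> set Q)"
proof
  fix z assume z: "z \<in> path_image (walk_curve \<gamma> P) \<inter> path_image (walk_curve \<gamma> Q)"
  obtain u v where uv: "(u, v) \<in> walk_edges P" "z \<in> path_image (\<gamma> u v)"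
    using z walk_curve_arc[OF pe P] by auto
  obtain s t where st: "(s, t) \<in> walk_edges Q" "z \<in> path_image (\<gamma> s t)"
    using z walk_curve_arc[OF pe Q] by auto
  have "{u, v} \<noteq> {s, t}"
    using no_common_edge uv(1) walk_edges_subset[OF st(1)] by (fastforce simp: doubleton_eq_iff)
  then have "z \<in> pos ` ({u, v} \<inter> {s, t})"
    using plane_embedding_edges_Int[OF pe walk_edges_adj[OF P(3) uv(1)] walk_edges_adj[OF Q(3) st(1)]]
      uv(2) st(2) by blast
  moreover have "{u, v} \<inter> {s, t} \<subseteq> set P \<inter> set Q"
    using walk_edges_subset[OF uv(1)] walk_edges_subset[OF st(1)] by blast
  ultimately show "z \<in> pos ` (set P \<inter> set Q)" by blast
qed

lemma walk_curves_Int: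
  assumes pe: "plane_embedding V E pos \<gamma>"
    and P: "graph_path E a b P" "3 \<le> length P" and Q: "graph_path E a b Q" "3 \<le> length Q"
    and PQ: "set P \<inter> set Q = {a, b}"
  shows "path_image (walk_curve \<gamma> P) \<inter> path_image (walk_curve \<gamma> Q) = {pos a, pos b}"
proof
  have P': "distinct P" "2 \<le> length P" "successively E P" and Q': "distinct Q" "2 \<le> length Q" "successively E Q"
    using P Q by (auto simp: graph_path_def)
  have "\<forall>(u, v)\<in>walk_edges P. u \<notin> set Q \<or> v \<notin> set Q"
  proof (clarify)
    fix u v assume uv: "(u, v) \<in> walk_edges P" "u \<in> set Q" "v \<in> set Q"
    have "u \<noteq> v" using uv(1) P'(1) by (auto simp: walk_edges_iff nth_eq_iff_index_eq)
    moreover have "u \<in> {a, b}" "v \<in> {a, b}" using uv PQ walk_edges_subset[OF uv(1)] by auto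
    ultimately have "{u, v} = {hd P, last P}" using P(1) by (auto simp: graph_path_def)
    then show False using walk_edge_not_ends[OF P'(1) P(2) uv(1)] by blast
  qed
  then show "path_image (walk_curve \<gamma> P) \<inter> path_image (walk_curve \<gamma> Q) \<subseteq> {pos a, pos b}"
    using walk_curves_Int_subset[OF pe P' Q'] PQ by auto
  have "pathstart (walk_curve \<gamma> P) = pos a" "pathfinish (walk_curve \<gamma> P) = pos b"
    "pathstart (walk_curve \<gamma> Q) = pos a" "pathfinish (walk_curve \<gamma> Q) = pos b"
    using walk_curve_arc[OF pe P'] walk_curve_arc[OF pe Q'] P(1) Q(1) by (simp_all add: graph_path_def)
  then show "{pos a, pos b} \<subseteq> path_image (walk_curve \<gamma> P) \<inter> path_image (walk_curve \<gamma> Q)"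
    using pathstart_in_path_image[of "walk_curve \<gamma> P"] pathfinish_in_path_image[of "walk_curve \<gamma> P"]
      pathstart_in_path_image[of "walk_curve \<gamma> Q"] pathfinish_in_path_image[of "walk_curve \<gamma> Q"]
    by auto
qed

lemma arc_half_open_image:
  assumes "arc g"
  shows "connected (g ` {0..<1})" "pathstart g \<in> g ` {0..<1}"
    "pathfinish g \<in> closure (g ` {0..<1})" "pathfinish g \<notin> g ` {0..<1}"
proof -
  have cont: "continuous_on {0..1} g" using arc_imp_path[OF assms] by (simp add: path_def)
  show "connected (g ` {0..<1})"
    by (rule connected_continuous_image) (use cont in \<open>auto intro: continuous_on_subset\<close>)
  show "pathstart g \<in> g ` {0..<1}" by (simp add: pathstart_def)
  have "g ` closure {0..<1::real} \<subseteq> closure (g ` {0..<1})"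
    by (rule image_closure_subset) (use cont in \<open>auto intro: closure_subset[THEN subsetD]\<close>)
  then show "pathfinish g \<in> closure (g ` {0..<1})" by (auto simp: pathfinish_def)
  show "pathfinish g \<notin> g ` {0..<1}"
    using inj_onD[OF arc_imp_inj_on[OF assms], of _ 1] by (force simp: pathfinish_def)
qed

lemma edge_avoids_walk_curve:
  assumes pe: "plane_embedding V E pos \<gamma>" and wx: "E w x"
    and P: "distinct P" "2 \<le> length P" "successively E P" and w: "w \<notin> set P"
  shows "\<gamma> w x ` {0..<1} \<inter> path_image (walk_curve \<gamma> P) = {}"
proof -
  have "z \<notin> path_image (walk_curve \<gamma> P)" if z: "z \<in> \<gamma> w x ` {0..<1}" for z
  proof
    assume "z \<in> path_image (walk_curve \<gamma> P)"
    then obtain s t where st: "(s, t) \<in> walk_edges P" "z \<in> path_image (\<gamma> s t)"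
      using walk_curve_arc[OF pe P] by auto
    have "w \<notin> {s, t}" using w walk_edges_subset[OF st(1)] by auto
    moreover have "z \<in> path_image (\<gamma> w x)" using z by (auto simp: path_image_def)
    ultimately have "z \<in> pos ` ({w, x} \<inter> {s, t})"
      using plane_embedding_edges_Int[OF pe wx walk_edges_adj[OF P(3) st(1)]] st(2) by blast
    then have "z = pathfinish (\<gamma> w x)"
      using \<open>w \<notin> {s, t}\<close> plane_embedding_edge[OF pe wx] by auto
    then show False using arc_half_open_image(4)[OF plane_embedding_edge(1)[OF pe wx]] z by simp
  qed
  then show ?thesis by blast
qed

lemma graph_paths_theta_arcs:
  assumes pe: "plane_embedding V E pos \<gamma>"
    and paths: "\<forall>P \<in> {P1, P2, P3}. graph_path E a b P \<and> 3 \<le> length P"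
    and disjoint: "set P1 \<inter> set P2 = {a, b}" "set P1 \<inter> set P3 = {a, b}" "set P2 \<inter> set P3 = {a, b}"
  shows "theta_arcs (pos a) (pos b) (walk_curve \<gamma> P1) (walk_curve \<gamma> P2) (walk_curve \<gamma> P3)"
proof -
  have curve: "arc (walk_curve \<gamma> P) \<and> pathstart (walk_curve \<gamma> P) = pos a \<and>
      pathfinish (walk_curve \<gamma> P) = pos b" if "P \<in> {P1, P2, P3}" for P
  proof -
    have "graph_path E a b P" "3 \<le> length P" using paths that by blast+
    then show ?thesis using walk_curve_arc[OF pe, of P] unfolding graph_path_def by auto
  qed
  have Int: "path_image (walk_curve \<gamma> P) \<inter> path_image (walk_curve \<gamma> Q) = {pos a, pos b}"
    if "P \<in> {P1, P2, P3}" "Q \<in> {P1, P2, P3}" "set P \<inter> set Q = {a, b}" for P Q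
    using walk_curves_Int[OF pe _ _ _ _ that(3)] paths that(1,2) by blast
  show ?thesis
    unfolding theta_arcs_def using curve[of P1] curve[of P2] curve[of P3]
      Int[of P1 P2] Int[of P1 P3] Int[of P2 P3] disjoint by simp
qed

lemma pos_inner_vertex_on_walk_curve:
  assumes sg: "simple_graph V E" and pe: "plane_embedding V E pos \<gamma>"
    and P: "graph_path E a b P" "2 \<le> length P" and x: "x \<in> set P" "x \<notin> {a, b}"
  shows "pos x \<in> path_image (walk_curve \<gamma> P) - {pos a, pos b}"
proof -
  have P': "distinct P" "successively E P" using P(1) by (simp_all add: graph_path_def)
  have "a \<in> set P" "b \<in> set P" using P(1) by (metis graph_path_def hd_in_set last_in_set)+
  moreover have "set P \<subseteq> V" by (rule successively_subset_vertices[OF sg P'(2) P(2)])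
  moreover have "inj_on pos V" using pe by (simp add: plane_embedding_def)
  ultimately have "pos x \<noteq> pos a" "pos x \<noteq> pos b" using x by (auto dest: inj_onD)
  then show ?thesis using pos_in_walk_curve[OF pe P'(1) P(2) P'(2) x(1)] by blast
qed

lemma connected_edge_star:
  assumes pe: "plane_embedding V E pos \<gamma>" and N: "\<forall>x \<in> N. E w x"
  shows "connected (\<Union>x \<in> N. \<gamma> w x ` {0..<1})"
proof (rule connected_Union)
  fix S assume "S \<in> (\<lambda>x. \<gamma> w x ` {0..<1}) ` N"
  then show "connected S"
    using N arc_half_open_image(1)[OF plane_embedding_edge(1)[OF pe]] by blast
next
  have "pos w \<in> \<gamma> w x ` {0..<1}" if "x \<in> N" for x
    using N that arc_half_open_image(2)[OF plane_embedding_edge(1)[OF pe]] plane_embedding_edge(2)[OF pe]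
    by metis
  then show "\<Inter> ((\<lambda>x. \<gamma> w x ` {0..<1}) ` N) \<noteq> {}" by blast
qed

lemma edge_star_avoids_walk_curve:
  assumes pe: "plane_embedding V E pos \<gamma>" and N: "\<forall>x \<in> N. E w x"
    and P: "distinct P" "2 \<le> length P" "successively E P" and w: "w \<notin> set P"
  shows "(\<Union>x \<in> N. \<gamma> w x ` {0..<1}) \<inter> path_image (walk_curve \<gamma> P) = {}"
  using edge_avoids_walk_curve[OF pe _ P w] N by blast

lemma pos_in_closure_edge_star:
  assumes pe: "plane_embedding V E pos \<gamma>" and x: "E w x" "x \<in> N"
  shows "pos x \<in> closure (\<Union>y \<in> N. \<gamma> w y ` {0..<1})"
proof -
  have "pos x \<in> closure (\<gamma> w x ` {0..<1})"
    using arc_half_open_image(3)[OF plane_embedding_edge(1)[OF pe x(1)]] plane_embedding_edge(3)[OF pe x(1)]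
    by simp
  moreover have "\<gamma> w x ` {0..<1} \<subseteq> (\<Union>y \<in> N. \<gamma> w y ` {0..<1})" using x(2) by blast
  ultimately show ?thesis using closure_mono by blast
qed

lemma plane_theta_no_common_neighbour:
  assumes sg: "simple_graph V E" and pe: "plane_embedding V E pos \<gamma>"
    and paths: "\<forall>P \<in> {P1, P2, P3}. graph_path E a b P"
    and disjoint: "set P1 \<inter> set P2 = {a, b}" "set P1 \<inter> set P3 = {a, b}" "set P2 \<inter> set P3 = {a, b}"
    and w: "w \<notin> set P1 \<union> set P2 \<union> set P3"
    and nbrs: "\<forall>P \<in> {P1, P2, P3}. \<exists>x \<in> set P - {a, b}. E w x"
  shows False
proof -
  have path: "graph_path E a b P" if "P \<in> {P1, P2, P3}" for P
    using paths that by blast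
  have long: "3 \<le> length P" if "P \<in> {P1, P2, P3}" for P
  proof -
    from bspec[OF nbrs that] obtain x where "x \<in> set P" "x \<notin> {a, b}" by blast
    then show ?thesis by (intro graph_path_inner_vertex_length[OF path[OF that]]) auto
  qed
  have P: "distinct P" "2 \<le> length P" "successively E P" if "P \<in> {P1, P2, P3}" for P
    using path[OF that] long[OF that] unfolding graph_path_def by auto
  let ?X = "walk_curve \<gamma> P1" and ?Y = "walk_curve \<gamma> P2" and ?Z = "walk_curve \<gamma> P3"
  have theta: "theta_arcs (pos a) (pos b) ?X ?Y ?Z"
    by (rule graph_paths_theta_arcs[OF pe _ disjoint]) (use path long in blast)
  obtain x1 where x1: "x1 \<in> set P1 - {a, b}" "E w x1" using nbrs by blast
  obtain x2 where x2: "x2 \<in> set P2 - {a, b}" "E w x2" using nbrs by blast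
  obtain x3 where x3: "x3 \<in> set P3 - {a, b}" "E w x3" using nbrs by blast
  have wx: "\<forall>x \<in> {x1, x2, x3}. E w x" using x1 x2 x3 by blast
  \<comment> \<open>The half-open edges from \<open>w\<close> to \<open>x1\<close>, \<open>x2\<close>, \<open>x3\<close> form a connected set touching the
    interiors of all three arcs of the theta graph.\<close>
  define K where "K = (\<Union>x \<in> {x1, x2, x3}. \<gamma> w x ` {0..<1})"
  have "connected K" unfolding K_def by (rule connected_edge_star[OF pe wx])
  moreover have "K \<inter> (path_image ?X \<union> path_image ?Y \<union> path_image ?Z) = {}"
    using edge_star_avoids_walk_curve[OF pe wx P[of P1]] edge_star_avoids_walk_curve[OF pe wx P[of P2]]
      edge_star_avoids_walk_curve[OF pe wx P[of P3]] w
    unfolding K_def by auto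
  moreover have "\<forall>A \<in> {?X, ?Y, ?Z}. \<exists>z \<in> path_image A - {pos a, pos b}. z \<in> closure K"
  proof -
    have on: "pos x \<in> path_image (walk_curve \<gamma> P) - {pos a, pos b}"
      if "P \<in> {P1, P2, P3}" "x \<in> set P - {a, b}" for P x
      using pos_inner_vertex_on_walk_curve[OF sg pe path[OF that(1)] P(2)[OF that(1)]] that(2) by blast
    have "pos x \<in> closure K" if "x \<in> {x1, x2, x3}" for x
      unfolding K_def using pos_in_closure_edge_star[OF pe _ that] wx that by blast
    then show ?thesis using on[of P1 x1] on[of P2 x2] on[of P3 x3] x1(1) x2(1) x3(1) by auto
  qed
  ultimately show False by (rule theta_no_face_touching_all_arcs[OF theta])
qed

section \<open>Cycles through vertices outside a cycle\<close>

lemma cyclic_successor_iff: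
  assumes "0 < n"
  shows "(\<forall>i<n. R i ((i + 1) mod n)) \<longleftrightarrow> (\<forall>i. Suc i < n \<longrightarrow> R i (Suc i)) \<and> R (n - 1) 0"
proof
  assume h: "\<forall>i<n. R i ((i + 1) mod n)"
  have "R i (Suc i)" if "Suc i < n" for i using h[rule_format, of i] that by simp
  moreover have "R (n - 1) 0" using h[rule_format, of "n - 1"] assms by simp
  ultimately show "(\<forall>i. Suc i < n \<longrightarrow> R i (Suc i)) \<and> R (n - 1) 0" by blast
next
  assume h: "(\<forall>i. Suc i < n \<longrightarrow> R i (Suc i)) \<and> R (n - 1) 0"
  show "\<forall>i<n. R i ((i + 1) mod n)"
  proof (intro allI impI)
    fix i assume "i < n"
    then consider "Suc i < n" | "i = n - 1" by linarith
    then show "R i ((i + 1) mod n)" using h assms by cases auto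
  qed
qed

lemma is_cycle_iff_successively:
  "is_cycle V E C \<longleftrightarrow>
     3 \<le> length C \<and> distinct C \<and> set C \<subseteq> V \<and> successively E C \<and> E (last C) (hd C)"
proof -
  have "(\<forall>i < length C. E (C ! i) (C ! ((i + 1) mod length C))) \<longleftrightarrow>
      successively E C \<and> E (last C) (hd C)" if "3 \<le> length C"
  proof -
    have "C \<noteq> []" using that by auto
    then show ?thesis using cyclic_successor_iff[of "length C" "\<lambda>i j. E (C ! i) (C ! j)"]
      by (simp add: successively_conv_nth hd_conv_nth last_conv_nth)
  qed
  then show ?thesis unfolding is_cycle_def by blast
qed

lemma is_cycle_rotate:
  assumes "is_cycle V E C"
  shows "is_cycle V E (rotate k C)"
  unfolding is_cycle_def
proof (intro conjI allI impI)
  let ?n = "length C"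
  have n: "0 < ?n" and adj: "\<And>j. j < ?n \<Longrightarrow> E (C ! j) (C ! ((j + 1) mod ?n))"
    using assms by (auto simp: is_cycle_def)
  fix i assume i: "i < length (rotate k C)"
  have "E (C ! ((k + i) mod ?n)) (C ! (((k + i) mod ?n + 1) mod ?n))" using adj n by simp
  moreover have "((k + i) mod ?n + 1) mod ?n = (k + (i + 1) mod ?n) mod ?n" by (simp add: mod_simps)
  ultimately show "E (rotate k C ! i) (rotate k C ! ((i + 1) mod length (rotate k C)))"
    using i n by (simp add: nth_rotate)
qed (use assms in \<open>auto simp: is_cycle_def\<close>)

lemma is_cycle_append_take:
  assumes C: "is_cycle V E C"
    and W: "W \<noteq> []" "distinct W" "set W \<subseteq> V" "set W \<inter> set C = {}" "successively E W"
    and m: "m < length C" "3 \<le> length W + m + 1"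
    and ends: "E (last W) (hd C)" "E (C ! m) (hd W)"
  shows "is_cycle V E (W @ take (Suc m) C)"
proof -
  have C': "distinct C" "set C \<subseteq> V" "successively E C"
    using C by (auto simp: is_cycle_iff_successively)
  have "successively E (take (Suc m) C)"
    using C'(3) successively_append_iff[of E "take (Suc m) C" "drop (Suc m) C"] by simp
  moreover have "hd (take (Suc m) C) = hd C" by simp
  moreover have "last (take (Suc m) C) = C ! m" using m by (simp add: take_Suc_conv_app_nth)
  moreover have "take (Suc m) C \<noteq> []" "set (take (Suc m) C) \<subseteq> set C"
    using m(1) by (auto simp: set_take_subset)
  ultimately show ?thesis
    using W m ends C' by (auto simp: is_cycle_iff_successively successively_append_iff)
qed

lemma cycle_through_external_path:
  assumes C: "is_cycle V E C"
    and W: "W \<noteq> []" "distinct W" "set W \<subseteq> V" "set W \<inter> set C = {}" "successively E W"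
    and ij: "i \<le> j" "j < i + length C" "3 \<le> length W + (j - i) + 1"
    and ends: "E (last W) (C ! (i mod length C))" "E (C ! (j mod length C)) (hd W)"
  obtains D where "is_cycle V E D" "length D = length W + (j - i) + 1"
proof -
  let ?C = "rotate i C"
  have "C \<noteq> []" using C by (auto simp: is_cycle_def)
  then have "hd ?C = C ! (i mod length C)" by (rule hd_rotate_conv_nth)
  moreover have "?C ! (j - i) = C ! (j mod length C)" using ij by (simp add: nth_rotate)
  ultimately have "is_cycle V E (W @ take (Suc (j - i)) ?C)"
    by (intro is_cycle_append_take[OF is_cycle_rotate[OF C]]) (use W ij ends in auto)
  moreover have "length (W @ take (Suc (j - i)) ?C) = length W + (j - i) + 1" using ij by simp
  ultimately show thesis by (rule that)
qed

lemma apex_cycle_length: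
  assumes sg: "simple_graph V E" and C: "is_cycle V E C" and v: "v \<in> V" "v \<notin> set C"
    and ij: "i < j" "j < i + length C"
    and adj: "E v (C ! (i mod length C))" "E v (C ! (j mod length C))"
    and no_L: "\<forall>D. is_cycle V E D \<longrightarrow> length D \<notin> L"
  shows "j - i + 2 \<notin> L"
proof -
  have adj': "E (C ! (j mod length C)) v" using sg adj(2) by (simp add: simple_graph_def)
  obtain D where "is_cycle V E D" "length D = length [v] + (j - i) + 1"
    by (rule cycle_through_external_path[OF C, of "[v]" i j]) (use v ij adj adj' in auto)
  then have "is_cycle V E D" "length D = j - i + 2" by simp_all
  then show ?thesis using no_L by metis
qed

lemma edge_apex_cycle_length:
  assumes sg: "simple_graph V E" and C: "is_cycle V E C"
    and u: "u \<in> V" "u \<notin> set C" "u' \<in> V" "u' \<notin> set C" "E u u'"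
    and ij: "i \<le> j" "j < i + length C"
    and adj: "E u' (C ! (i mod length C))" "E u (C ! (j mod length C))"
    and no_L: "\<forall>D. is_cycle V E D \<longrightarrow> length D \<notin> L"
  shows "j - i + 3 \<notin> L"
proof -
  have adj': "E (C ! (j mod length C)) u" "u \<noteq> u'" using sg adj(2) u(5) by (auto simp: simple_graph_def)
  obtain D where "is_cycle V E D" "length D = length [u, u'] + (j - i) + 1"
    by (rule cycle_through_external_path[OF C, of "[u, u']" i j]) (use u ij adj adj' in auto)
  then have "is_cycle V E D" "length D = j - i + 3" by simp_all
  then show ?thesis using no_L by metis
qed

lemma is_cycle_square:
  assumes sg: "simple_graph V E" and V: "u \<in> V" "u' \<in> V" "x \<in> V" "y \<in> V"
    and distinct: "distinct [u, x, u', y]" and adj: "E u x" "E u y" "E u' x" "E u' y"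
  shows "is_cycle V E [u, x, u', y]"
proof -
  have "E x u'" "E y u" using sg adj(2,3) by (simp_all add: simple_graph_def)
  then show ?thesis unfolding is_cycle_iff_successively using V distinct adj by simp
qed

section \<open>Feet of claws and biclaws\<close>

lemma distinct_pair_positions:
  assumes "x \<in> set C" "y \<in> set C" "x \<noteq> y"
  obtains i j where "i < j" "j < length C" "{C ! i, C ! j} = {x, y}"
proof -
  obtain p q where pq: "p < length C" "C ! p = x" "q < length C" "C ! q = y"
    using assms(1,2) by (metis in_set_conv_nth)
  then have "p \<noteq> q" using assms(3) by auto
  then show thesis
  proof (cases "p < q")
    case True
    then show thesis using that[of p q] pq by simp
  next
    case False
    then show thesis using that[of q p] pq \<open>p \<noteq> q\<close> by (simp add: insert_commute)
  qed
qed

lemma three_distinct_ordered: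
  fixes p q r :: nat
  assumes "p \<noteq> q" "p \<noteq> r" "q \<noteq> r"
  obtains i j k where "i < j" "j < k" "{i, j, k} = {p, q, r}"
proof -
  have "\<exists>i j k. i < j \<and> j < k \<and> {i, j, k} = {p, q, r}"
    using assms by (metis insert_commute linorder_neqE_nat)
  then show thesis using that by blast
qed

lemma distinct_three_positions:
  assumes "x \<in> set C" "y \<in> set C" "z \<in> set C" "x \<noteq> y" "x \<noteq> z" "y \<noteq> z"
  obtains i j k where "i < j" "j < k" "k < length C" "{C ! i, C ! j, C ! k} = {x, y, z}"
proof -
  obtain p q r where pqr: "p < length C" "C ! p = x" "q < length C" "C ! q = y" "r < length C" "C ! r = z"
    using assms(1-3) by (metis in_set_conv_nth)
  then have "p \<noteq> q" "p \<noteq> r" "q \<noteq> r" using assms(4-6) by auto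
  then obtain i j k where ijk: "i < j" "j < k" "{i, j, k} = {p, q, r}" by (rule three_distinct_ordered)
  have "k \<in> {p, q, r}" using ijk(3) by blast
  then have "k < length C" using pqr by auto
  moreover have "{C ! i, C ! j, C ! k} = {x, y, z}"
    using arg_cong[OF ijk(3), of "image ((!) C)"] pqr by simp
  ultimately show thesis using that ijk(1,2) by blast
qed

lemma has_claw_ordered_feet:
  assumes "has_claw V E C"
  obtains v i j k where "v \<in> V" "v \<notin> set C" "i < j" "j < k" "k < length C"
    "E v (C ! i)" "E v (C ! j)" "E v (C ! k)"
proof -
  obtain v x y z where v: "v \<in> V" "v \<notin> set C"
    and feet: "x \<in> set C" "y \<in> set C" "z \<in> set C" "x \<noteq> y" "x \<noteq> z" "y \<noteq> z"
    and vxyz: "E v x" "E v y" "E v z"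
    using assms unfolding has_claw_def by blast
  obtain i j k where ijk: "i < j" "j < k" "k < length C" "{C ! i, C ! j, C ! k} = {x, y, z}"
    using distinct_three_positions[OF feet] .
  have "C ! i \<in> {x, y, z}" "C ! j \<in> {x, y, z}" "C ! k \<in> {x, y, z}" using ijk(4) by blast+
  then have "E v (C ! i)" "E v (C ! j)" "E v (C ! k)" using vxyz by auto
  then show thesis using that v ijk(1-3) by blast
qed

lemma has_biclaw_ordered_feet:
  assumes "has_biclaw V E C"
  obtains u1 u2 a b c d where "u1 \<in> V" "u1 \<notin> set C" "u2 \<in> V" "u2 \<notin> set C" "E u1 u2"
    "a < b" "b < length C" "c < d" "d < length C"
    "E u1 (C ! a)" "E u1 (C ! b)" "E u2 (C ! c)" "E u2 (C ! d)"
proof -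
  obtain u1 u2 x1 x2 y1 y2 where u: "u1 \<in> V" "u1 \<notin> set C" "u2 \<in> V" "u2 \<notin> set C" "E u1 u2"
    and feet: "x1 \<in> set C" "x2 \<in> set C" "y1 \<in> set C" "y2 \<in> set C" "x1 \<noteq> x2" "y1 \<noteq> y2"
    and uxy: "E u1 x1" "E u1 x2" "E u2 y1" "E u2 y2"
    using assms unfolding has_biclaw_def by blast
  obtain a b where ab: "a < b" "b < length C" "{C ! a, C ! b} = {x1, x2}"
    using distinct_pair_positions[OF feet(1,2,5)] .
  obtain c d where cd: "c < d" "d < length C" "{C ! c, C ! d} = {y1, y2}"
    using distinct_pair_positions[OF feet(3,4,6)] .
  have "E u1 (C ! a)" "E u1 (C ! b)" "E u2 (C ! c)" "E u2 (C ! d)"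
    using ab(3) cd(3) uxy by (auto simp: doubleton_eq_iff)
  then show thesis using that u ab(1,2) cd(1,2) by blast
qed

lemma pairs_interleaved_or_arranged:
  fixes a b c d n :: nat
  assumes "a < b" "b < n" "c < d" "d < n"
  shows "a < c \<and> c < b \<and> b < d \<or> c < a \<and> a < d \<and> d < b \<or>
    (\<exists>i1 i2 i3 i4. i1 < n \<and> i1 < i2 \<and> i2 \<le> i3 \<and> i3 < i4 \<and> i4 \<le> i1 + n \<and>
       {i1 mod n, i2 mod n} = {a, b} \<and> {i3 mod n, i4 mod n} = {c, d})"
proof (cases "a \<le> c \<and> d \<le> b \<or> b \<le> c \<or> d \<le> a \<or> c \<le> a \<and> b \<le> d")
  case True
  have "\<exists>i1 i2 i3 i4. i1 < n \<and> i1 < i2 \<and> i2 \<le> i3 \<and> i3 < i4 \<and> i4 \<le> i1 + n \<and>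
      {i1 mod n, i2 mod n} = {a, b} \<and> {i3 mod n, i4 mod n} = {c, d}"
    using True
  proof (elim disjE conjE)
    assume "a \<le> c" "d \<le> b"
    then show ?thesis using assms
      by (intro exI[of _ b] exI[of _ "a + n"] exI[of _ "c + n"] exI[of _ "d + n"]) (auto simp: insert_commute)
  next
    assume "b \<le> c"
    then show ?thesis using assms by (intro exI[of _ a] exI[of _ b] exI[of _ c] exI[of _ d]) auto
  next
    assume "d \<le> a"
    then show ?thesis using assms
      by (intro exI[of _ a] exI[of _ b] exI[of _ "c + n"] exI[of _ "d + n"]) auto
  next
    assume "c \<le> a" "b \<le> d"
    then show ?thesis using assms
      by (intro exI[of _ a] exI[of _ b] exI[of _ d] exI[of _ "c + n"]) (auto simp: insert_commute)
  qed
  then show ?thesis by blast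
next
  case False
  then show ?thesis using assms by linarith
qed

section \<open>Biclaws of cycles in plane graphs\<close>

lemma cycle_split_paths:
  assumes sg: "simple_graph V E" and C: "is_cycle V E C" and b: "0 < b" "b < length C"
  shows "graph_path E (C ! 0) (C ! b) (take (Suc b) C)"
    and "graph_path E (C ! 0) (C ! b) (hd C # rev (drop b C))"
    and "set (take (Suc b) C) \<inter> set (hd C # rev (drop b C)) = {C ! 0, C ! b}"
proof -
  have C': "distinct C" "successively E C" "E (last C) (hd C)"
    using C by (auto simp: is_cycle_iff_successively)
  have sym: "E y x" if "E x y" for x y using sg that by (simp add: simple_graph_def)
  have "C \<noteq> []" using b by auto
  then have hd: "hd C = C ! 0" by (simp add: hd_conv_nth)
  have drop_b: "drop b C = C ! b # drop (Suc b) C" using b(2) by (rule Cons_nth_drop_Suc[symmetric])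
  have take_drop: "set (take (Suc b) C) \<inter> set (drop (Suc b) C) = {}"
    using C'(1) by (rule set_take_disj_set_drop_if_distinct) simp
  have in_take: "C ! i \<in> set (take (Suc b) C)" if "i \<le> b" for i
  proof -
    have "take (Suc b) C ! i = C ! i" "i < length (take (Suc b) C)" using that b(2) by auto
    then show ?thesis by (metis nth_mem)
  qed
  have "successively E (take (Suc b) C)" "successively E (drop b C)"
    using C'(2) successively_append_iff[of E "take (Suc b) C" "drop (Suc b) C"]
      successively_append_iff[of E "take b C" "drop b C"] by simp_all
  moreover have "last (take (Suc b) C) = C ! b" using b(2) by (simp add: take_Suc_conv_app_nth)
  ultimately show "graph_path E (C ! 0) (C ! b) (take (Suc b) C)"
    unfolding graph_path_def using C'(1) \<open>C \<noteq> []\<close> hd b by simp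
  have "successively (\<lambda>x y. E y x) (drop b C)"
    by (rule successively_mono[OF \<open>successively E (drop b C)\<close>]) (simp add: sym)
  moreover have "hd (rev (drop b C)) = last C" "last (rev (drop b C)) = C ! b" "rev (drop b C) \<noteq> []"
    using b(2) by (simp_all add: hd_rev last_rev hd_drop_conv_nth)
  moreover have "hd C \<notin> set (drop b C)"
  proof -
    have "C ! 0 \<noteq> C ! b" using C'(1) b \<open>C \<noteq> []\<close> nth_eq_iff_index_eq[of C 0 b] by simp
    then show ?thesis using drop_b take_drop in_take[of 0] hd by auto
  qed
  ultimately show "graph_path E (C ! 0) (C ! b) (hd C # rev (drop b C))"
    unfolding graph_path_def using C'(1) sym[OF C'(3)] hd by (simp add: successively_Cons)
  show "set (take (Suc b) C) \<inter> set (hd C # rev (drop b C)) = {C ! 0, C ! b}"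
    using drop_b take_drop in_take[of 0] in_take[of b] hd by auto
qed

text \<open>The two arcs of \<open>C\<close> between \<open>C ! 0\<close> and \<open>C ! b\<close> and the path through \<open>u1\<close> form a theta
  graph, and \<open>u2\<close> is adjacent to an inner vertex of each of its three paths.\<close>

lemma biclaw_feet_not_interleaved_0:
  assumes sg: "simple_graph V E" and pe: "plane_embedding V E pos \<gamma>" and C: "is_cycle V E C"
    and u: "u1 \<in> V" "u1 \<notin> set C" "u2 \<in> V" "u2 \<notin> set C" "E u1 u2"
    and idx: "0 < c" "c < b" "b < d" "d < length C"
    and adj: "E u1 (C ! 0)" "E u1 (C ! b)" "E u2 (C ! c)" "E u2 (C ! d)"
  shows False
proof -
  define P1 where "P1 = take (Suc b) C"
  define P2 where "P2 = hd C # rev (drop b C)"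
  define P3 where "P3 = [C ! 0, u1, C ! b]"
  have b: "0 < b" "b < length C" using idx by auto
  note split = cycle_split_paths[OF sg C b, folded P1_def P2_def]
  have sym: "E y x" if "E x y" for x y using sg that by (simp add: simple_graph_def)
  have "distinct C" using C by (simp add: is_cycle_def)
  moreover have "0 < length C" "b < length C" "c < length C" using idx by auto
  ultimately have ne: "C ! 0 \<noteq> C ! b" "C ! c \<noteq> C ! 0" "C ! c \<noteq> C ! b" "C ! d \<noteq> C ! 0" "C ! d \<noteq> C ! b"
    using idx by (simp_all add: nth_eq_iff_index_eq)
  have in_C: "C ! 0 \<in> set C" "C ! b \<in> set C" using idx by (auto intro: nth_mem)
  have "C \<noteq> []" using idx by auto
  then have sub_C: "set P1 \<subseteq> set C" "set P2 \<subseteq> set C"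
    unfolding P1_def P2_def by (auto dest: in_set_takeD in_set_dropD)
  have "graph_path E (C ! 0) (C ! b) P3"
    unfolding graph_path_def P3_def using u(2) in_C ne(1) sym[OF adj(1)] adj(2) by auto
  then have paths: "\<forall>P \<in> {P1, P2, P3}. graph_path E (C ! 0) (C ! b) P" using split(1,2) by auto
  have "set P1 \<inter> set P3 = {C ! 0, C ! b}" "set P2 \<inter> set P3 = {C ! 0, C ! b}"
    using u(2) sub_C split(3) by (auto simp: P3_def)
  note disjoint = split(3) this
  have "u1 \<noteq> u2" using sg u(5) by (auto simp: simple_graph_def)
  then have w: "u2 \<notin> set P1 \<union> set P2 \<union> set P3" using u(4) sub_C in_C by (auto simp: P3_def)
  have c_in: "C ! c \<in> set P1"
  proof -
    have "P1 ! c = C ! c" "c < length P1" unfolding P1_def using idx by auto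
    then show ?thesis by (metis nth_mem)
  qed
  have d_in: "C ! d \<in> set P2"
  proof -
    have "drop b C ! (d - b) = C ! d" "d - b < length (drop b C)" using idx by auto
    then show ?thesis unfolding P2_def by (metis nth_mem set_rev list.set_intros(2))
  qed
  have "\<forall>P \<in> {P1, P2, P3}. \<exists>x \<in> set P - {C ! 0, C ! b}. E u2 x"
    using c_in d_in ne u(2) in_C adj(3,4) sym[OF u(5)] by (auto simp: P3_def)
  then show False by (rule plane_theta_no_common_neighbour[OF sg pe paths disjoint w])
qed

lemma biclaw_feet_not_interleaved:
  assumes sg: "simple_graph V E" and pe: "plane_embedding V E pos \<gamma>" and C: "is_cycle V E C"
    and u: "u1 \<in> V" "u1 \<notin> set C" "u2 \<in> V" "u2 \<notin> set C" "E u1 u2"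
    and idx: "a < c" "c < b" "b < d" "d < length C"
    and adj: "E u1 (C ! a)" "E u1 (C ! b)" "E u2 (C ! c)" "E u2 (C ! d)"
  shows False
proof -
  have rot: "rotate a C ! (t - a) = C ! t" if "a \<le> t" "t < length C" for t
    using that by (simp add: nth_rotate)
  have u': "u1 \<notin> set (rotate a C)" "u2 \<notin> set (rotate a C)" using u by simp_all
  show False
    by (rule biclaw_feet_not_interleaved_0[OF sg pe is_cycle_rotate[OF C] u(1) u'(1) u(3) u'(2) u(5),
          where c = "c - a" and b = "b - a" and d = "d - a"])
      (use idx adj rot[of a] rot[of b] rot[of c] rot[of d] in auto)
qed

lemma plane_biclaw_arrangement:
  assumes sg: "simple_graph V E" and pe: "plane_embedding V E pos \<gamma>" and C: "is_cycle V E C"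
    and biclaw: "has_biclaw V E C"
  obtains u1 u2 i1 i2 i3 i4 where "u1 \<in> V" "u2 \<in> V" "u1 \<notin> set C" "u2 \<notin> set C" "E u1 u2"
    "i1 < length C" "i1 < i2" "i2 \<le> i3" "i3 < i4" "i4 \<le> i1 + length C"
    "E u1 (C ! (i1 mod length C))" "E u1 (C ! (i2 mod length C))"
    "E u2 (C ! (i3 mod length C))" "E u2 (C ! (i4 mod length C))"
proof -
  obtain u1 u2 a b c d where u: "u1 \<in> V" "u1 \<notin> set C" "u2 \<in> V" "u2 \<notin> set C" "E u1 u2"
    and ab: "a < b" "b < length C" and cd: "c < d" "d < length C"
    and adj: "E u1 (C ! a)" "E u1 (C ! b)" "E u2 (C ! c)" "E u2 (C ! d)"
    using has_biclaw_ordered_feet[OF biclaw] by blast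
  have sym: "E u2 u1" using sg u(5) by (simp add: simple_graph_def)
  from pairs_interleaved_or_arranged[OF ab cd] show thesis
  proof (elim disjE exE conjE)
    assume "a < c" "c < b" "b < d"
    then show thesis using biclaw_feet_not_interleaved[OF sg pe C u _ _ _ cd(2) adj] by blast
  next
    assume "c < a" "a < d" "d < b"
    then show thesis
      using biclaw_feet_not_interleaved[OF sg pe C u(3,4,1,2) sym _ _ _ ab(2) adj(3,4,1,2)] by blast
  next
    fix i1 i2 i3 i4
    assume i: "i1 < length C" "i1 < i2" "i2 \<le> i3" "i3 < i4" "i4 \<le> i1 + length C"
      and ends: "{i1 mod length C, i2 mod length C} = {a, b}" "{i3 mod length C, i4 mod length C} = {c, d}"
    have "E u1 (C ! (i1 mod length C))" "E u1 (C ! (i2 mod length C))"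
      "E u2 (C ! (i3 mod length C))" "E u2 (C ! (i4 mod length C))"
      using ends adj by (auto simp: doubleton_eq_iff)
    then show thesis using that u i by blast
  qed
qed

section \<open>Cell lengths of claws and biclaws\<close>

text \<open>\<open>x\<close>, \<open>y\<close>, \<open>z\<close> are the lengths of the three arcs into which the feet of a claw cut \<open>C\<close>;
  the other numbers are the lengths of \<open>C\<close> and of the cycles formed by the apex with one or two
  of these arcs.\<close>

lemma claw_cell_lengths:
  fixes x y z :: nat
  assumes pos: "0 < x" "0 < y" "0 < z" "x + y + z \<le> 13"
    and no_bad: "\<forall>l \<in> {x + y + z, x + 2, y + 2, z + 2, y + z + 2, x + z + 2, x + y + 2}. l \<notin> {4, 7, 9}"
  shows "x + y + z = 12 \<and> {#x + 2, y + 2, z + 2#} \<in> {{#3, 5, 10#}, {#5, 5, 8#}, {#6, 6, 6#}} \<or>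
         x + y + z = 13 \<and> {#x + 2, y + 2, z + 2#} = {#3, 5, 11#}"
proof -
  define Q where "Q x y z \<longleftrightarrow>
    (\<forall>l \<in> set [x + y + z, x + 2, y + 2, z + 2, y + z + 2, x + z + 2, x + y + 2]. l \<notin> {4, 7, 9}) \<longrightarrow>
      x + y + z = 12 \<and> sort [x + 2, y + 2, z + 2] \<in> {[3, 5, 10], [5, 5, 8], [6, 6, 6]} \<or>
      x + y + z = 13 \<and> sort [x + 2, y + 2, z + 2] = [3, 5, 11]" for x y z :: nat
  have "list_all (\<lambda>x. list_all (\<lambda>y. list_all (\<lambda>z. Q x y z)
      [1..<14 - x - y]) [1..<14 - x]) [1..<14]"
    unfolding Q_def by code_simp
  then have "\<forall>x \<in> {1..<14}. \<forall>y \<in> {1..<14 - x}. \<forall>z \<in> {1..<14 - x - y}. Q x y z"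
    unfolding list_all_iff set_upt .
  moreover have "x \<in> {1..<14}" "y \<in> {1..<14 - x}" "z \<in> {1..<14 - x - y}" using pos by auto
  ultimately have "Q x y z" by blast
  define S where "S = sort [x + 2, y + 2, z + 2]"
  have "x + y + z = 12 \<and> S \<in> {[3, 5, 10], [5, 5, 8], [6, 6, 6]} \<or> x + y + z = 13 \<and> S = [3, 5, 11]"
    using \<open>Q x y z\<close> no_bad unfolding Q_def S_def[symmetric] by simp
  moreover have "mset S = {#x + 2, y + 2, z + 2#}" unfolding S_def mset_sort by simp
  ultimately show ?thesis by auto
qed

text \<open>\<open>g1\<close>, \<open>g2\<close>, \<open>g3\<close>, \<open>g4\<close> are the lengths of the arcs of \<open>C\<close> between consecutive feet
  \<open>u1'\<close>, \<open>u1''\<close>, \<open>u2'\<close>, \<open>u2''\<close> of a biclaw \<open>u1u2\<close>; the other numbers are the lengths of \<open>C\<close> and of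
  the cycles through \<open>u1\<close>, \<open>u2\<close> or \<open>u1u2\<close> and an arc of \<open>C\<close>.  Two of these cycles exist only if
  \<open>g2\<close> resp. \<open>g4\<close> is positive, and \<open>g2 = g4 = 0\<close> would give a 4-cycle.\<close>

lemma biclaw_cell_lengths:
  fixes g1 g2 g3 g4 :: nat
  assumes pos: "0 < g1" "0 < g3" "g1 + g2 + g3 + g4 \<le> 13" "0 < g2 \<or> 0 < g4"
    and no_bad: "\<forall>l \<in> {g1 + g2 + g3 + g4, g1 + 2, g3 + 2, g2 + g3 + g4 + 2, g1 + g2 + g4 + 2,
        g2 + 3, g4 + 3, g1 + g2 + 3, g2 + g3 + 3, g3 + g4 + 3, g4 + g1 + 3}. l \<notin> {4, 7, 9}"
      "0 < g2 \<Longrightarrow> g1 + g3 + g4 + 3 \<notin> {4, 7, 9}" "0 < g4 \<Longrightarrow> g1 + g2 + g3 + 3 \<notin> {4, 7, 9}"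
  shows "g1 + g2 + g3 + g4 = 13 \<and> {#g1 + 2, g2 + 3, g3 + 2, g4 + 3#} = {#5, 5, 5, 8#}"
proof -
  define Q where "Q g1 g2 g3 g4 \<longleftrightarrow>
    (0 < g2 \<or> 0 < g4) \<and>
    (\<forall>l \<in> set [g1 + g2 + g3 + g4, g1 + 2, g3 + 2, g2 + g3 + g4 + 2, g1 + g2 + g4 + 2,
       g2 + 3, g4 + 3, g1 + g2 + 3, g2 + g3 + 3, g3 + g4 + 3, g4 + g1 + 3]. l \<notin> {4, 7, 9}) \<and>
    (0 < g2 \<longrightarrow> g1 + g3 + g4 + 3 \<notin> {4, 7, 9}) \<and> (0 < g4 \<longrightarrow> g1 + g2 + g3 + 3 \<notin> {4, 7, 9}) \<longrightarrow>
    g1 + g2 + g3 + g4 = 13 \<and> sort [g1 + 2, g2 + 3, g3 + 2, g4 + 3] = [5, 5, 5, 8]" for g1 g2 g3 g4 :: nat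
  have "list_all (\<lambda>g1. list_all (\<lambda>g2. list_all (\<lambda>g3. list_all (\<lambda>g4. Q g1 g2 g3 g4)
      [0..<14 - g1 - g2 - g3]) [1..<14 - g1 - g2]) [0..<14 - g1]) [1..<14]"
    unfolding Q_def by code_simp
  then have "\<forall>g1 \<in> {1..<14}. \<forall>g2 \<in> {0..<14 - g1}. \<forall>g3 \<in> {1..<14 - g1 - g2}.
      \<forall>g4 \<in> {0..<14 - g1 - g2 - g3}. Q g1 g2 g3 g4"
    unfolding list_all_iff set_upt .
  moreover have "g1 \<in> {1..<14}" "g2 \<in> {0..<14 - g1}" "g3 \<in> {1..<14 - g1 - g2}"
    "g4 \<in> {0..<14 - g1 - g2 - g3}"
    using pos by auto
  ultimately have "Q g1 g2 g3 g4" by blast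
  define S where "S = sort [g1 + 2, g2 + 3, g3 + 2, g4 + 3]"
  have "g1 + g2 + g3 + g4 = 13 \<and> S = [5, 5, 5, 8]"
    using \<open>Q g1 g2 g3 g4\<close> pos no_bad unfolding Q_def S_def[symmetric] by simp
  moreover have "mset S = {#g1 + 2, g2 + 3, g3 + 2, g4 + 3#}" unfolding S_def mset_sort by simp
  ultimately show ?thesis by auto
qed

lemma claw_typed:
  assumes sg: "simple_graph V E" and C: "is_cycle V E C" and short: "length C \<le> 13"
    and no_bad: "\<forall>D. is_cycle V E D \<longrightarrow> length D \<notin> {4, 7, 9}" and claw: "has_claw V E C"
  shows "length C = 12 \<and> (has_typed_claw V E C {#3, 5, 10#} \<or> has_typed_claw V E C {#5, 5, 8#} \<or>
           has_typed_claw V E C {#6, 6, 6#}) \<or>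
         length C = 13 \<and> has_typed_claw V E C {#3, 5, 11#}"
proof -
  let ?n = "length C"
  obtain v i j k where v: "v \<in> V" "v \<notin> set C" and ijk: "i < j" "j < k" "k < ?n"
    and adj: "E v (C ! i)" "E v (C ! j)" "E v (C ! k)"
    using has_claw_ordered_feet[OF claw] by blast
  note apex = apex_cycle_length[OF sg C v _ _ _ _ no_bad]
  have mods: "i mod ?n = i" "j mod ?n = j" "k mod ?n = k" "(i + ?n) mod ?n = i" "(j + ?n) mod ?n = j"
    using ijk by simp_all
  have "j - i + 2 \<notin> {4, 7, 9}" using apex[of i j] ijk adj mods by simp
  moreover have "k - j + 2 \<notin> {4, 7, 9}" using apex[of j k] ijk adj mods by simp
  moreover have "i + ?n - k + 2 \<notin> {4, 7, 9}" using apex[of k "i + ?n"] ijk adj mods by simp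
  moreover have "i + ?n - j + 2 \<notin> {4, 7, 9}" using apex[of j "i + ?n"] ijk adj mods by simp
  moreover have "j + ?n - k + 2 \<notin> {4, 7, 9}" using apex[of k "j + ?n"] ijk adj mods by simp
  moreover have "k - i + 2 \<notin> {4, 7, 9}" using apex[of i k] ijk adj mods by simp
  moreover have "?n \<notin> {4, 7, 9}" using no_bad C by blast
  moreover have "(k - j) + (i + ?n - k) = i + ?n - j" "(j - i) + (i + ?n - k) = j + ?n - k"
    "(j - i) + (k - j) = k - i" "(k - i) + (i + ?n - k) = ?n"
    using ijk by auto
  ultimately have cells:
    "?n = 12 \<and> {#j - i + 2, k - j + 2, i + ?n - k + 2#} \<in> {{#3, 5, 10#}, {#5, 5, 8#}, {#6, 6, 6#}} \<or>
     ?n = 13 \<and> {#j - i + 2, k - j + 2, i + ?n - k + 2#} = {#3, 5, 11#}"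
    using claw_cell_lengths[of "j - i" "k - j" "i + ?n - k"] ijk short by simp
  \<comment> \<open>Naming the multiset keeps the simplifier from normalising multiset equations.\<close>
  define M where "M = {#j - i + 2, k - j + 2, i + ?n - k + 2#}"
  have "?n + i - k = i + ?n - k" by linarith
  then have "has_typed_claw V E C M"
    unfolding has_typed_claw_def M_def using v ijk adj
    by (intro exI[of _ v] exI[of _ i] exI[of _ j] exI[of _ k]) simp
  then show ?thesis using cells unfolding M_def[symmetric] by auto
qed

lemma biclaw_gap_cycles:
  assumes sg: "simple_graph V E" and C: "is_cycle V E C"
    and no_bad: "\<forall>D. is_cycle V E D \<longrightarrow> length D \<notin> {4, 7, 9}"
    and u: "u1 \<in> V" "u2 \<in> V" "u1 \<notin> set C" "u2 \<notin> set C" "E u1 u2"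
    and i: "i1 < length C" "i1 < i2" "i2 \<le> i3" "i3 < i4" "i4 \<le> i1 + length C"
    and adj: "E u1 (C ! (i1 mod length C))" "E u1 (C ! (i2 mod length C))"
      "E u2 (C ! (i3 mod length C))" "E u2 (C ! (i4 mod length C))"
  defines "g1 \<equiv> i2 - i1" and "g2 \<equiv> i3 - i2" and "g3 \<equiv> i4 - i3" and "g4 \<equiv> i1 + length C - i4"
  shows "\<forall>l \<in> {g1 + 2, g3 + 2, g2 + g3 + g4 + 2, g1 + g2 + g4 + 2, g2 + 3, g4 + 3, g1 + g2 + 3,
      g2 + g3 + 3, g3 + g4 + 3, g4 + g1 + 3}. l \<notin> {4, 7, 9}"
    and "0 < g2 \<Longrightarrow> g1 + g3 + g4 + 3 \<notin> {4, 7, 9}"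
    and "0 < g4 \<Longrightarrow> g1 + g2 + g3 + 3 \<notin> {4, 7, 9}"
proof -
  let ?n = "length C"
  have "E u2 u1" using sg u(5) by (simp add: simple_graph_def)
  note apex1 = apex_cycle_length[OF sg C u(1,3) _ _ _ _ no_bad]
    and apex2 = apex_cycle_length[OF sg C u(2,4) _ _ _ _ no_bad]
    and edge12 = edge_apex_cycle_length[OF sg C u(1,3,2,4,5) _ _ _ _ no_bad]
    and edge21 = edge_apex_cycle_length[OF sg C u(2,4,1,3) \<open>E u2 u1\<close> _ _ _ _ no_bad]
  have mods: "(i1 + ?n) mod ?n = i1 mod ?n" "(i2 + ?n) mod ?n = i2 mod ?n" "(i3 + ?n) mod ?n = i3 mod ?n"
    by simp_all
  have n: "?n = g1 + g2 + g3 + g4" and g: "0 < g1" "0 < g3"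
    using i unfolding g1_def g2_def g3_def g4_def by auto
  have lt: "i2 < i1 + ?n" "i4 < i3 + ?n" "i3 < i1 + ?n" "i4 < i2 + ?n" using i n g by linarith+
  have d: "i2 - i1 = g1" "i4 - i3 = g3" "i1 + ?n - i2 = g2 + g3 + g4" "i3 + ?n - i4 = g1 + g2 + g4"
    "i3 - i2 = g2" "i1 + ?n - i4 = g4" "i3 - i1 = g1 + g2" "i4 - i2 = g2 + g3" "i1 + ?n - i3 = g3 + g4"
    "i2 + ?n - i4 = g4 + g1" "i2 + ?n - i3 = g1 + g3 + g4" "i4 - i1 = g1 + g2 + g3"
    using i n unfolding g1_def g2_def g3_def g4_def by auto
  have "g1 + 2 \<notin> {4, 7, 9}" using apex1[of i1 i2] i(2) lt(1) adj(1,2) d(1) by simp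
  moreover have "g3 + 2 \<notin> {4, 7, 9}" using apex2[of i3 i4] i(4) lt(2) adj(3,4) d(2) by simp
  moreover have "g2 + g3 + g4 + 2 \<notin> {4, 7, 9}"
    using apex1[of i2 "i1 + ?n"] i(2) lt(1) adj(1,2) mods(1) d(3) by simp
  moreover have "g1 + g2 + g4 + 2 \<notin> {4, 7, 9}"
    using apex2[of i4 "i3 + ?n"] i(4) lt(2) adj(3,4) mods(3) d(4) by simp
  moreover have "g2 + 3 \<notin> {4, 7, 9}" using edge21[of i2 i3] i(3,4) lt(4) adj(2,3) d(5) by simp
  moreover have "g4 + 3 \<notin> {4, 7, 9}"
    using edge12[of i4 "i1 + ?n"] i(2-5) lt(2) adj(1,4) mods(1) d(6) by simp
  moreover have "g1 + g2 + 3 \<notin> {4, 7, 9}" using edge21[of i1 i3] i(2,3) lt(3) adj(1,3) d(7) by simp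
  moreover have "g2 + g3 + 3 \<notin> {4, 7, 9}" using edge21[of i2 i4] i(3,4) lt(4) adj(2,4) d(8) by simp
  moreover have "g3 + g4 + 3 \<notin> {4, 7, 9}"
    using edge12[of i3 "i1 + ?n"] i(2,3) lt(3) adj(1,3) mods(1) d(9) by simp
  moreover have "g4 + g1 + 3 \<notin> {4, 7, 9}"
    using edge12[of i4 "i2 + ?n"] i(3,4) lt(4) adj(2,4) mods(2) d(10) by simp
  ultimately show "\<forall>l \<in> {g1 + 2, g3 + 2, g2 + g3 + g4 + 2, g1 + g2 + g4 + 2, g2 + 3, g4 + 3,
      g1 + g2 + 3, g2 + g3 + 3, g3 + g4 + 3, g4 + g1 + 3}. l \<notin> {4, 7, 9}"
    by simp
  show "0 < g2 \<Longrightarrow> g1 + g3 + g4 + 3 \<notin> {4, 7, 9}"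
    using edge12[of i3 "i2 + ?n"] i(2,3) lt(3) adj(2,3) mods(2) d(11) unfolding g2_def by simp
  show "0 < g4 \<Longrightarrow> g1 + g2 + g3 + 3 \<notin> {4, 7, 9}"
    using edge21[of i1 i4] i(2,3,4) adj(1,4) d(12) unfolding g4_def by simp
qed

lemma biclaw_typed:
  assumes sg: "simple_graph V E" and C: "is_cycle V E C" and short: "length C \<le> 13"
    and no_bad: "\<forall>D. is_cycle V E D \<longrightarrow> length D \<notin> {4, 7, 9}"
    and u: "u1 \<in> V" "u2 \<in> V" "u1 \<notin> set C" "u2 \<notin> set C" "E u1 u2"
    and i: "i1 < length C" "i1 < i2" "i2 \<le> i3" "i3 < i4" "i4 \<le> i1 + length C"
    and adj: "E u1 (C ! (i1 mod length C))" "E u1 (C ! (i2 mod length C))"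
      "E u2 (C ! (i3 mod length C))" "E u2 (C ! (i4 mod length C))"
  shows "length C = 13 \<and> has_typed_biclaw V E C {#5, 5, 5, 8#}"
proof -
  let ?n = "length C"
  define g1 g2 g3 g4 where "g1 = i2 - i1" and "g2 = i3 - i2" and "g3 = i4 - i3" and "g4 = i1 + ?n - i4"
  note gaps = biclaw_gap_cycles[OF sg C no_bad u i adj, folded g1_def g2_def g3_def g4_def]
  have n: "?n = g1 + g2 + g3 + g4" and g: "0 < g1" "0 < g3"
    using i unfolding g1_def g2_def g3_def g4_def by auto
  have mod1: "i1 mod ?n = i1" using i(1) by simp
  have "0 < g2 \<or> 0 < g4"
  proof (rule ccontr)
    assume "\<not> (0 < g2 \<or> 0 < g4)"
    then have "i3 = i2" "i4 = i1 + ?n" using i unfolding g2_def g4_def by auto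
    then have adj2: "E u2 (C ! (i2 mod ?n))" "E u2 (C ! i1)" using adj(3,4) mod1 by auto
    have i2n: "i2 mod ?n < ?n" using i(1) by (auto intro: mod_less_divisor)
    have "i2 < i1 + ?n" using i n g unfolding g1_def by linarith
    then have "i2 mod ?n \<noteq> i1" using i(1,2) by (auto simp: mod_if)
    then have ne: "C ! i1 \<noteq> C ! (i2 mod ?n)"
      using C i(1) i2n nth_eq_iff_index_eq[of C i1 "i2 mod ?n"] by (auto simp: is_cycle_def)
    have "C ! i1 \<in> set C" "C ! (i2 mod ?n) \<in> set C" using i(1) i2n by simp_all
    moreover have "set C \<subseteq> V" "u1 \<noteq> u2" using C sg u(5) by (auto simp: is_cycle_def simple_graph_def)
    ultimately have "is_cycle V E [u1, C ! i1, u2, C ! (i2 mod ?n)]"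
      using ne u adj(1,2) adj2 mod1 by (auto intro!: is_cycle_square[OF sg])
    then show False using no_bad by fastforce
  qed
  moreover have "g1 + g2 + g3 + g4 \<notin> {4, 7, 9}" using no_bad C n by metis
  ultimately have cells: "?n = 13 \<and> {#g1 + 2, g2 + 3, g3 + 2, g4 + 3#} = {#5, 5, 5, 8#}"
    using biclaw_cell_lengths[of g1 g3 g2 g4] gaps g short n by simp
  define M where "M = {#g1 + 2, g2 + 3, g3 + 2, g4 + 3#}"
  have "{#i2 - i1 + 2, i3 - i2 + 3, i4 - i3 + 2, i1 + ?n - i4 + 3#} = M"
    unfolding M_def g1_def g2_def g3_def g4_def ..
  moreover have "E u1 (C ! i1)" using adj(1) mod1 by simp
  ultimately have "has_typed_biclaw V E C M"
    unfolding has_typed_biclaw_def using u i adj(2-4) by blast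
  then show ?thesis using cells unfolding M_def[symmetric] by simp
qed

theorem lemma2p2:
  fixes V :: "'a set" and E :: "'a \<Rightarrow> 'a \<Rightarrow> bool" and C :: "'a list"
  assumes "simple_graph V E"
    and "planar V E"
    and "connected_graph V E"
    and "\<forall>D. is_cycle V E D \<longrightarrow> length D \<notin> {4, 7, 9}"
    and "bad_cycle V E C"
  shows "length C \<in> {12, 13} \<and>
    (length C = 12 \<longrightarrow>
       has_typed_claw V E C {#3, 5, 10#} \<or> has_typed_claw V E C {#5, 5, 8#} \<or>
       has_typed_claw V E C {#6, 6, 6#}) \<and>
    (length C = 13 \<longrightarrow>
       has_typed_claw V E C {#3, 5, 11#} \<or> has_typed_biclaw V E C {#5, 5, 5, 8#})"
proof -
  obtain pos \<gamma> where pe: "plane_embedding V E pos \<gamma>" using assms(2) unfolding planar_def by blast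
  have C: "is_cycle V E C" and short: "length C \<le> 13"
    and "has_claw V E C \<or> has_biclaw V E C"
    using assms(5) unfolding bad_cycle_def good_cycle_def by auto
  then show ?thesis
  proof (elim disjE)
    assume "has_claw V E C"
    then show ?thesis using claw_typed[OF assms(1) C short assms(4)] by auto
  next
    assume "has_biclaw V E C"
    then obtain u1 u2 i1 i2 i3 i4 where
      "u1 \<in> V" "u2 \<in> V" "u1 \<notin> set C" "u2 \<notin> set C" "E u1 u2"
      "i1 < length C" "i1 < i2" "i2 \<le> i3" "i3 < i4" "i4 \<le> i1 + length C"
      "E u1 (C ! (i1 mod length C))" "E u1 (C ! (i2 mod length C))"
      "E u2 (C ! (i3 mod length C))" "E u2 (C ! (i4 mod length C))"
      by (rule plane_biclaw_arrangement[OF assms(1) pe C])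
    then have "length C = 13 \<and> has_typed_biclaw V E C {#5, 5, 5, 8#}"
      by (rule biclaw_typed[OF assms(1) C short assms(4)])
    then show ?thesis by auto
  qed
qed

end
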